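(* Let $n,p\ge1$. For each $i\in\{1,\dots,n\}$, $\lambda_i(\delta_{(n,p)})=0$, and for each $j\in\{1,\dots,p\}$, $\rho_j(\delta_{(n,p)})=0$.
   Context: Work over a field of characteristic $0$. $F_{(m,q)}$ is the Lie algebra generated by $x_{i,j}$, $(i,j)\in\{1,\dots,m\}\times\{1,\dots,q\}$, with defining relations $[x_{i,j},x_{i',j'}]=0$ whenever $i\ne i'$ and $j\ne j'$ (quotient of the free Lie algebra); it is graded by total degree ($\deg x_{i,j}=1$) and $\widehat F_{(m,q)}$ is its completion. $\lambda_i:\widehat F_{(n,p)}\to\widehat F_{(n-1,p)}$ is the continuous Lie algebra morphism with $x_{i',j'}\mapsto x_{i',j'}$ if $i'<i$, $\mapsto0$ if $i'=i$, $\mapsto x_{i'-1,j'}$ if $i'>i$; $\rho_j:\widehat F_{(n,p)}\to\widehat F_{(n,p-1)}$ is the continuous Lie morphism with $x_{i',j'}\mapsto x_{i',j'}$ if $j'<j$, $\mapsto0$ if $j'=j$, $\mapsto x_{i',j'-1}$ if $j'>j$. For elements of positive valuation, $y_1\star\cdots\star y_N$ denotes the Campbell–Baker–Hausdorff series with $\exp(y_1\star\cdots\star y_N)=\exp(y_1)\cdots\exp(y_N)$ (empty product $=0$). Define $$\delta_{(n,p)}=\sum_{k=0}^n\sum_{l=0}^p\sum_{\substack{1\le i_1<\cdots<i_k\le n\\1\le j_1<\cdots<j_l\le p}}(-1)^{n+p-k-l}(x_{i_1,j_1}\star\cdots\star x_{i_1,j_l})\star\cdots\star(x_{i_k,j_1}\star\cdots\star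 x_{i_k,j_l})\in\widehat{F}_{(n,p)}.$$ *)

theory Defs
  imports Main
begin

text \<open>
  Letters are pairs (i,j) of naturals standing for the generators x_{i,j}.
  Elements of the completed free associative algebra on these letters are
  formal noncommutative power series, i.e. functions from words to the field.
  The completed Lie algebra F^_{(m,q)} embeds (PBW, characteristic 0) into the
  completed universal enveloping algebra, which is the completed free associative
  algebra modulo the closed two-sided ideal generated by the relations
  x_{i,j} x_{i',j'} - x_{i',j'} x_{i,j} for i /= i' and j /= j'.
\<close>

type_synonym letter = "nat \<times> nat"
type_synonym 'a ser = "letter list \<Rightarrow> 'a"

definition ser_one :: "'a::field ser" where
  "ser_one w = (if w = [] then 1 else 0)"

definition ser_gen :: "nat \<Rightarrow> nat \<Rightarrow> 'a::field ser" where
  "ser_gen i j w = (if w = [(i, j)] then 1 else 0)"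

definition ser_mul :: "'a::field ser \<Rightarrow> 'a ser \<Rightarrow> 'a ser" where
  "ser_mul f g w = (\<Sum>k\<le>length w. f (take k w) * g (drop k w))"

fun ser_pow :: "'a::field ser \<Rightarrow> nat \<Rightarrow> 'a ser" where
  "ser_pow f 0 = ser_one"
| "ser_pow f (Suc k) = ser_mul f (ser_pow f k)"

text \<open>exp of a series with zero constant term (only terms k <= length w contribute to
  the coefficient of w).\<close>
definition ser_exp :: "'a::field_char_0 ser \<Rightarrow> 'a ser" where
  "ser_exp f w = (\<Sum>k\<le>length w. ser_pow f k w / fact k)"

text \<open>log of a series with constant term 1: log(1+g) = sum_{k>=1} (-1)^(k+1) g^k / k.\<close>
definition ser_log :: "'a::field_char_0 ser \<Rightarrow> 'a ser" where
  "ser_log f w = (let g = (\<lambda>u. f u - ser_one u) in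
     (\<Sum>k\<in>{1..length w}. (-1) ^ (k + 1) * ser_pow g k w / of_nat k))"

text \<open>Campbell-Baker-Hausdorff product y_1 * ... * y_N := log(exp y_1 ... exp y_N);
  empty product gives log 1 = 0.\<close>
definition cbh :: "'a::field_char_0 ser list \<Rightarrow> 'a ser" where
  "cbh ys = ser_log (foldr (\<lambda>y acc. ser_mul (ser_exp y) acc) ys ser_one)"

definition delta :: "nat \<Rightarrow> nat \<Rightarrow> 'a::field_char_0 ser" where
  "delta n p w = (\<Sum>I\<in>Pow {1..n}. \<Sum>J\<in>Pow {1..p}.
      (-1) ^ (n + p - card I - card J) *
      cbh (map (\<lambda>i. cbh (map (\<lambda>j. ser_gen i j) (sorted_list_of_set J)))
               (sorted_list_of_set I)) w)"

text \<open>Continuous algebra morphism induced by a substitution of letters, where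
  sigma x = None means x is sent to 0 and sigma x = Some y means x is sent to y.\<close>
definition ser_subst :: "(letter \<Rightarrow> letter option) \<Rightarrow> 'a::field ser \<Rightarrow> 'a ser" where
  "ser_subst \<sigma> f w = (\<Sum>u\<in>{u. length u = length w \<and> map \<sigma> u = map Some w}. f u)"

definition lam :: "nat \<Rightarrow> 'a::field ser \<Rightarrow> 'a ser" where
  "lam i = ser_subst (\<lambda>(a, b). if a < i then Some (a, b) else if a = i then None
                               else Some (a - 1, b))"

definition rho :: "nat \<Rightarrow> 'a::field ser \<Rightarrow> 'a ser" where
  "rho j = ser_subst (\<lambda>(a, b). if b < j then Some (a, b) else if b = j then None
                               else Some (a, b - 1))"

definition commuting :: "letter \<Rightarrow> letter \<Rightarrow> bool" where
  "commuting x y \<longleftrightarrow> fst x \<noteq> fst y \<and> snd x \<noteq> snd y"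

inductive rel_ideal :: "'a::field ser \<Rightarrow> bool" where
  zero: "rel_ideal (\<lambda>_. 0)"
| gen: "commuting x y \<Longrightarrow>
     rel_ideal (\<lambda>w. (if w = u @ [x, y] @ v then 1 else 0) - (if w = u @ [y, x] @ v then 1 else 0))"
| add: "rel_ideal f \<Longrightarrow> rel_ideal g \<Longrightarrow> rel_ideal (\<lambda>w. f w + g w)"
| smult: "rel_ideal f \<Longrightarrow> rel_ideal (\<lambda>w. c * f w)"

definition hom_comp :: "nat \<Rightarrow> 'a::field ser \<Rightarrow> 'a ser" where
  "hom_comp d f w = (if length w = d then f w else 0)"

text \<open>f represents 0 in the completed quotient algebra: f lies in the closure of the
  (homogeneous) relation ideal, i.e. every homogeneous component lies in the ideal.\<close>
definition zero_mod_rel :: "'a::field ser \<Rightarrow> bool" where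
  "zero_mod_rel f \<longleftrightarrow> (\<forall>d. rel_ideal (hom_comp d f))"

end

(*
  The maps lam i and rho j are substitutions of variables, hence continuous algebra
  morphisms of the completed free algebra; so they commute with exp, log and therefore with
  the CBH product.  They send the generators of row i (resp. column j) to 0, and a zero factor
  can be dropped from a CBH product because exp 0 = 1.  Consequently, in the image of delta the
  term indexed by (I, J) with i in I equals the term indexed by (I - {i}, J), and these two
  terms carry opposite signs.  So the image vanishes already in the free algebra, not merely
  modulo the commutation relations.
*)
theory Submission
  imports Defs
begin

definition ser_comap :: "(letter \<Rightarrow> letter) \<Rightarrow> 'a ser \<Rightarrow> 'a ser" where
  "ser_comap g f w = f (map g w)"

lemma ser_subst_eq_ser_comap:
  assumes "\<And>x z. \<sigma> x = Some z \<longleftrightarrow> x = g z"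
  shows "ser_subst \<sigma> f = ser_comap g f"
proof -
  have "map \<sigma> u = map Some w \<longleftrightarrow> u = map g w" for u w
    by (induction u arbitrary: w) (auto simp: Cons_eq_map_conv assms)
  then have "{u. length u = length w \<and> map \<sigma> u = map Some w} = {map g w}" for w
    by auto
  then show ?thesis
    by (simp add: ser_subst_def ser_comap_def fun_eq_iff)
qed

lemma ser_comap_one: "ser_comap g ser_one = ser_one"
  by (simp add: ser_comap_def ser_one_def fun_eq_iff)

lemma ser_comap_mul: "ser_comap g (ser_mul f h) = ser_mul (ser_comap g f) (ser_comap g h)"
  by (simp add: ser_comap_def ser_mul_def take_map drop_map fun_eq_iff)

lemma ser_comap_pow: "ser_comap g (ser_pow f k) = ser_pow (ser_comap g f) k"
  by (induction k) (simp_all add: ser_comap_one ser_comap_mul)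

lemma ser_comap_exp: "ser_comap g (ser_exp f) = ser_exp (ser_comap g f)"
  using ser_comap_pow[of g f] by (simp add: ser_comap_def ser_exp_def fun_eq_iff)

lemma ser_comap_log: "ser_comap g (ser_log f) = ser_log (ser_comap g f)"
proof -
  have "ser_comap g (\<lambda>u. f u - ser_one u) = (\<lambda>u. ser_comap g f u - ser_one u)"
    using ser_comap_one[of g] by (simp add: ser_comap_def fun_eq_iff)
  then have "ser_pow (\<lambda>u. f u - ser_one u) k (map g w)
      = ser_pow (\<lambda>u. ser_comap g f u - ser_one u) k w" for k w
    by (metis ser_comap_def ser_comap_pow)
  then show ?thesis
    by (simp add: ser_log_def ser_comap_def[of g "ser_log f"] fun_eq_iff)
qed

lemma ser_comap_cbh: "ser_comap g (cbh ys) = cbh (map (ser_comap g) ys)"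
proof -
  have "ser_comap g (foldr (\<lambda>y acc. ser_mul (ser_exp y) acc) ys ser_one)
      = foldr (\<lambda>y acc. ser_mul (ser_exp y) acc) (map (ser_comap g) ys) ser_one"
    by (induction ys) (simp_all add: ser_comap_one ser_comap_mul ser_comap_exp)
  then show ?thesis
    by (simp add: cbh_def ser_comap_log)
qed

lemma ser_mul_zero_left: "ser_mul (\<lambda>_. 0) h = (\<lambda>_. (0::'a::field))"
  by (simp add: ser_mul_def fun_eq_iff)

lemma ser_mul_one_left: "ser_mul ser_one h = (h :: 'a::field ser)"
proof -
  have "ser_one (take k w) * h (drop k w) = (if k = 0 then h w else 0)" if "k \<le> length w" for k w
    using that by (auto simp: ser_one_def)
  then have "ser_mul ser_one h w = (\<Sum>k\<le>length w. if k = 0 then h w else 0)" for w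
    unfolding ser_mul_def by (intro sum.cong) simp_all
  then show ?thesis
    by (simp add: fun_eq_iff)
qed

lemma ser_pow_zero: "k \<noteq> 0 \<Longrightarrow> ser_pow (\<lambda>_. 0) k = (\<lambda>_. (0::'a::field))"
  by (cases k) (simp_all add: ser_mul_zero_left)

lemma ser_exp_zero: "ser_exp (\<lambda>_. 0) = (ser_one :: 'a::field_char_0 ser)"
proof -
  have "ser_exp (\<lambda>_. 0 :: 'a) w = (\<Sum>k\<le>length w. if k = 0 then ser_one w else 0)" for w
    unfolding ser_exp_def by (intro sum.cong) (simp_all add: ser_pow_zero)
  then show ?thesis
    by (simp add: fun_eq_iff)
qed

lemma ser_log_one: "ser_log ser_one = (\<lambda>_. 0 :: 'a::field_char_0)"
  by (simp add: ser_log_def ser_pow_zero fun_eq_iff)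

lemma cbh_Nil: "cbh [] = (\<lambda>_. 0)"
  by (simp add: cbh_def ser_log_one)

lemma cbh_removeAll_zero: "cbh (removeAll (\<lambda>_. 0) ys) = cbh ys"
proof -
  have "foldr (\<lambda>y acc. ser_mul (ser_exp y) acc) (removeAll (\<lambda>_. 0) ys) ser_one
      = foldr (\<lambda>y acc. ser_mul (ser_exp y) acc) ys ser_one"
    by (induction ys) (auto simp: ser_exp_zero ser_mul_one_left)
  then show ?thesis
    by (simp add: cbh_def)
qed

lemma cbh_all_zero:
  assumes "\<forall>y\<in>set ys. y = (\<lambda>_. 0)"
  shows "cbh ys = (\<lambda>_. 0)"
proof -
  have "removeAll (\<lambda>_. 0) ys = []"
    using assms by (simp add: removeAll_filter_not_eq filter_empty_conv)
  then show ?thesis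
    by (metis cbh_removeAll_zero cbh_Nil)
qed

lemma cbh_sorted_insert_zero:
  assumes "F x = (\<lambda>_. 0)" and "finite A" and "x \<notin> A"
  shows "cbh (map F (sorted_list_of_set (insert x A))) = cbh (map F (sorted_list_of_set A))"
proof -
  have "removeAll (\<lambda>_. 0) (map F (insort x xs)) = removeAll (\<lambda>_. 0) (map F xs)" for xs
    by (induction xs) (auto simp: assms(1))
  moreover have "sorted_list_of_set (insert x A) = insort x (sorted_list_of_set A)"
    using assms(2,3) by (simp add: sorted_list_of_set_insert)
  ultimately show ?thesis
    by (metis cbh_removeAll_zero)
qed

lemma sum_Pow_insert:
  assumes "finite A" and "x \<notin> A"
  shows "(\<Sum>K\<in>Pow (insert x A). f K) = (\<Sum>K\<in>Pow A. f K) + (\<Sum>K\<in>Pow A. f (insert x K))"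
proof -
  have "inj_on (insert x) (Pow A)"
    using assms(2) by (auto intro!: inj_onI)
  moreover have "(\<Sum>K\<in>Pow (insert x A). f K) = (\<Sum>K\<in>Pow A. f K) + (\<Sum>K\<in>insert x ` Pow A. f K)"
    unfolding Pow_insert by (rule sum.union_disjoint) (use assms in auto)
  ultimately show ?thesis
    by (simp add: sum.reindex)
qed

text \<open>The terms for K and insert x K cancel in pairs.\<close>
lemma sum_Pow_alternating_eq_0:
  fixes T :: "'b set \<Rightarrow> 'a::comm_ring_1"
  assumes "finite B" and "x \<in> B" and "card B \<le> N"
    and "\<And>K. K \<subseteq> B \<Longrightarrow> x \<notin> K \<Longrightarrow> T (insert x K) = T K"
  shows "(\<Sum>K\<in>Pow B. (-1) ^ (N - card K) * T K) = 0"
proof -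
  define A where "A = B - {x}"
  have B: "B = insert x A" and "x \<notin> A" and "finite A"
    using assms(1,2) by (auto simp: A_def)
  have "(-1) ^ (N - card (insert x K)) * T (insert x K) = - ((-1) ^ (N - card K) * T K)"
    if "K \<in> Pow A" for K
  proof -
    have "finite K" and "x \<notin> K" and "card K < N"
      using that \<open>finite A\<close> \<open>x \<notin> A\<close> assms(3) B card_mono[of A K] finite_subset[of K A] by auto
    then have "N - card K = Suc (N - card (insert x K))"
      by simp
    moreover have "T (insert x K) = T K"
      using assms(4) that B \<open>x \<notin> K\<close> by auto
    ultimately show ?thesis
      by simp
  qed
  then show ?thesis
    unfolding B using \<open>finite A\<close> \<open>x \<notin> A\<close> by (simp add: sum_Pow_insert sum_negf)
qed

definition cbh_grid :: "(nat \<Rightarrow> nat \<Rightarrow> 'a::field_char_0 ser) \<Rightarrow> nat set \<Rightarrow> nat set \<Rightarrow> 'a ser" where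
  "cbh_grid X I J = cbh (map (\<lambda>i. cbh (map (X i) (sorted_list_of_set J))) (sorted_list_of_set I))"

definition delta_of :: "(nat \<Rightarrow> nat \<Rightarrow> 'a::field_char_0 ser) \<Rightarrow> nat \<Rightarrow> nat \<Rightarrow> 'a ser" where
  "delta_of X n p w = (\<Sum>I\<in>Pow {1..n}. \<Sum>J\<in>Pow {1..p}.
      (-1) ^ (n + p - card I - card J) * cbh_grid X I J w)"

lemma delta_eq_delta_of: "delta n p = delta_of ser_gen n p"
  by (simp add: delta_def delta_of_def cbh_grid_def fun_eq_iff)

lemma ser_comap_cbh_grid: "ser_comap g (cbh_grid X I J) = cbh_grid (\<lambda>i j. ser_comap g (X i j)) I J"
  by (simp add: cbh_grid_def ser_comap_cbh o_def)

lemma ser_comap_delta_of: "ser_comap g (delta_of X n p) = delta_of (\<lambda>i j. ser_comap g (X i j)) n p"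
proof -
  have "cbh_grid X I J (map g w) = cbh_grid (\<lambda>i j. ser_comap g (X i j)) I J w" for I J w
    by (metis ser_comap_def ser_comap_cbh_grid)
  then show ?thesis
    by (simp add: delta_of_def ser_comap_def fun_eq_iff)
qed

lemma cbh_grid_insert_zero_row:
  assumes "\<And>j. X i j = (\<lambda>_. 0)" and "finite I" and "i \<notin> I"
  shows "cbh_grid X (insert i I) J = cbh_grid X I J"
proof -
  have "cbh (map (X i) (sorted_list_of_set J)) = (\<lambda>_. 0)"
    by (rule cbh_all_zero) (simp add: assms(1))
  then show ?thesis
    unfolding cbh_grid_def using assms(2,3) by (rule cbh_sorted_insert_zero)
qed

lemma cbh_grid_insert_zero_col:
  assumes "\<And>i. X i j = (\<lambda>_. 0)" and "finite J" and "j \<notin> J"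
  shows "cbh_grid X I (insert j J) = cbh_grid X I J"
proof -
  have "cbh (map (X i) (sorted_list_of_set (insert j J))) = cbh (map (X i) (sorted_list_of_set J))"
    for i
    by (rule cbh_sorted_insert_zero) (use assms in auto)
  then show ?thesis
    by (simp add: cbh_grid_def)
qed

lemma delta_of_zero_row:
  assumes "i \<in> {1..n}" and "\<And>j. X i j = (\<lambda>_. 0)"
  shows "delta_of X n p = (\<lambda>_. 0)"
proof
  fix w
  have "(\<Sum>I\<in>Pow {1..n}. (-1) ^ (n + p - card J - card I) * cbh_grid X I J w) = 0"
    if "J \<in> Pow {1..p}" for J
  proof (rule sum_Pow_alternating_eq_0)
    show "card {1..n} \<le> n + p - card J"
      using that card_mono[of "{1..p}" J] by simp
    show "cbh_grid X (insert i K) J w = cbh_grid X K J w" if "K \<subseteq> {1..n}" and "i \<notin> K" for K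
    proof -
      have "finite K"
        using that(1) finite_subset by blast
      then show ?thesis
        using cbh_grid_insert_zero_row[of X, OF assms(2) _ that(2)] by simp
    qed
  qed (use assms(1) in auto)
  then have "(\<Sum>J\<in>Pow {1..p}. \<Sum>I\<in>Pow {1..n}. (-1) ^ (n + p - card I - card J) * cbh_grid X I J w) = 0"
    by (simp add: add.commute)
  then show "delta_of X n p w = 0"
    unfolding delta_of_def by (subst sum.swap)
qed

lemma delta_of_zero_col:
  assumes "j \<in> {1..p}" and "\<And>i. X i j = (\<lambda>_. 0)"
  shows "delta_of X n p = (\<lambda>_. 0)"
proof
  fix w
  have "(\<Sum>J\<in>Pow {1..p}. (-1) ^ (n + p - card I - card J) * cbh_grid X I J w) = 0"
    if "I \<in> Pow {1..n}" for I
  proof (rule sum_Pow_alternating_eq_0)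
    show "card {1..p} \<le> n + p - card I"
      using that card_mono[of "{1..n}" I] by simp
    show "cbh_grid X I (insert j K) w = cbh_grid X I K w" if "K \<subseteq> {1..p}" and "j \<notin> K" for K
    proof -
      have "finite K"
        using that(1) finite_subset by blast
      then show ?thesis
        using cbh_grid_insert_zero_col[of X, OF assms(2) _ that(2)] by simp
    qed
  qed (use assms(1) in auto)
  then show "delta_of X n p w = 0"
    by (simp add: delta_of_def)
qed

definition skip_row :: "nat \<Rightarrow> letter \<Rightarrow> letter" where
  "skip_row i z = (if fst z < i then z else (Suc (fst z), snd z))"

definition skip_col :: "nat \<Rightarrow> letter \<Rightarrow> letter" where
  "skip_col j z = (if snd z < j then z else (fst z, Suc (snd z)))"

lemma lam_eq_ser_comap: "lam i f = ser_comap (skip_row i) f"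
  unfolding lam_def by (rule ser_subst_eq_ser_comap) (auto simp: skip_row_def split: if_splits)

lemma rho_eq_ser_comap: "rho j f = ser_comap (skip_col j) f"
  unfolding rho_def by (rule ser_subst_eq_ser_comap) (auto simp: skip_col_def split: if_splits)

lemma ser_comap_skip_row_gen: "ser_comap (skip_row i) (ser_gen i j) = (\<lambda>_. 0)"
  by (auto simp: ser_comap_def ser_gen_def skip_row_def fun_eq_iff split: if_splits)

lemma ser_comap_skip_col_gen: "ser_comap (skip_col j) (ser_gen i j) = (\<lambda>_. 0)"
  by (auto simp: ser_comap_def ser_gen_def skip_col_def fun_eq_iff split: if_splits)

lemma zero_mod_rel_zero: "zero_mod_rel (\<lambda>_. 0 :: 'a::field)"
proof -
  have "hom_comp d (\<lambda>_. 0 :: 'a) = (\<lambda>_. 0)" for d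
    by (simp add: hom_comp_def fun_eq_iff)
  then show ?thesis
    by (simp add: zero_mod_rel_def rel_ideal.zero)
qed

theorem lemma1p5:
  fixes n p :: nat
  assumes "1 \<le> n" and "1 \<le> p"
  shows "(\<forall>i\<in>{1..n}. zero_mod_rel (lam i (delta n p :: 'a::field_char_0 ser)))
       \<and> (\<forall>j\<in>{1..p}. zero_mod_rel (rho j (delta n p :: 'a ser)))"
proof (intro conjI ballI)
  fix i assume "i \<in> {1..n}"
  then have "lam i (delta n p :: 'a ser) = (\<lambda>_. 0)"
    unfolding lam_eq_ser_comap delta_eq_delta_of ser_comap_delta_of
    by (rule delta_of_zero_row) (rule ser_comap_skip_row_gen)
  then show "zero_mod_rel (lam i (delta n p :: 'a ser))"
    by (simp add: zero_mod_rel_zero)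
next
  fix j assume "j \<in> {1..p}"
  then have "rho j (delta n p :: 'a ser) = (\<lambda>_. 0)"
    unfolding rho_eq_ser_comap delta_eq_delta_of ser_comap_delta_of
    by (rule delta_of_zero_col) (rule ser_comap_skip_col_gen)
  then show "zero_mod_rel (rho j (delta n p :: 'a ser))"
    by (simp add: zero_mod_rel_zero)
qed

end
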